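(* Let $k\ge d$ and $(\mathbf x_1,\dots,\mathbf x_k)\sim\mathrm{VS}_{D_{\mathcal X}}^k$, with $\mathbf X\in\mathbb R^{k\times d}$ the matrix with rows $\mathbf x_i^\top$. Given $\mathbf X$, choose a subset $S\subseteq\{1,\dots,k\}$ with $|S|=d$ by standard volume sampling, i.e. with probability $\det(\mathbf X_S)^2/\det(\mathbf X^\top\mathbf X)$, and list the points $\{\mathbf x_i\}_{i\in S}$ in uniformly random order as $(\mathbf x_{i_1},\dots,\mathbf x_{i_d})$. Then $(\mathbf x_{i_1},\dots,\mathbf x_{i_d})\sim\mathrm{VS}_{D_{\mathcal X}}^d$.
   Context: $D_{\mathcal X}$ is a probability distribution on $\mathbb R^d$ with $\mathbb E\|\mathbf x\|^2<\infty$ and invertible $\boldsymbol\Sigma_{D_{\mathcal X}}:=\mathbb E[\mathbf x\mathbf x^\top]$; $D_{\mathcal X}^k$ is the law of $k$ i.i.d. draws. For $k\ge d$, $\mathrm{VS}_{D_{\mathcal X}}^k(A)=\mathbb E_{D_{\mathcal X}^k}[\mathbf 1_A\det(\sum_{i=1}^k\mathbf x_i\mathbf x_i^\top)]/\big(d!\binom kd\det(\boldsymbol\Sigma_{D_{\mathcal X}})\big)$. $\mathbf X_S$ is the $d\times d$ submatrix of rows indexed by $S$. (Under $\mathrm{VS}_{D_{\mathcal X}}^k$, $\det(\mathbf X^\top\mathbf X)>0$ almost surely.) *)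

theory Defs
  imports "HOL-Probability.Probability"
begin

definition second_moment :: "(real^'d::finite) measure \<Rightarrow> real^'d^'d" where
  "second_moment D = (\<chi> i j. \<integral>x. x$i * x$j \<partial>D)"

definition outer :: "real^'d::finite \<Rightarrow> real^'d \<Rightarrow> real^'d^'d" where
  "outer x y = (\<chi> i j. x$i * y$j)"

text \<open>Sum over I of x_i x_i^T, i.e. X_I^T X_I.\<close>
definition gram :: "(nat \<Rightarrow> real^'d::finite) \<Rightarrow> nat set \<Rightarrow> real^'d^'d" where
  "gram X I = (\<Sum>i\<in>I. outer (X i) (X i))"

text \<open>A fixed enumeration of the index type 'd by 0..d-1 (used only to order rows).\<close>
definition idx :: "'d::finite \<Rightarrow> nat" where
  "idx = (SOME f. bij_betw f (UNIV :: 'd set) {..<CARD('d)})"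

definition submat :: "(nat \<Rightarrow> real^'d::finite) \<Rightarrow> nat set \<Rightarrow> real^'d^'d" where
  "submat X S = (\<chi> r. X (sorted_list_of_set S ! idx r))"

definition VS :: "(real^'d::finite) measure \<Rightarrow> nat \<Rightarrow> (nat \<Rightarrow> real^'d) measure" where
  "VS D k = density (PiM {..<k} (\<lambda>_. D))
     (\<lambda>X. ennreal (det (gram X {..<k}) /
            (fact CARD('d) * real (k choose CARD('d)) * det (second_moment D))))"

end

theory Submission
  imports Defs "HOL-Combinatorics.Multiset_Permutations"
begin

text \<open>The density \<open>det (X\<^sup>T X)\<close> of
  \<open>VS\<^sup>k\<close> cancels against the denominator of the volume-sampling weight
  \<open>det (X\<^sub>S)\<^sup>2 / det (X\<^sup>T X)\<close>; this is legitimate because \<open>det X\<^sub>S \<noteq> 0\<close> makes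
  \<open>X\<^sup>T X\<close> positive definite. What remains, \<open>det (X\<^sub>S)\<^sup>2\<close>, is the Gram determinant of the
  selected points and depends only on the selected coordinates, so integrating out the other
  \<open>k - d\<close> coordinates of the product measure leaves the \<open>VS\<^sup>d\<close> density scaled by
  \<open>1 / (C(k,d) d!)\<close>. Summing over the \<open>C(k,d)\<close> subsets and \<open>d!\<close> orderings gives \<open>VS\<^sup>d\<close>.\<close>

lemma det_nonzero_iff_trivial_kernel:
  fixes A :: "real^'n^'n"
  shows "det A \<noteq> 0 \<longleftrightarrow> (\<forall>x. A *v x = 0 \<longrightarrow> x = 0)"
  by (metis invertible_det_nz invertible_left_inverse matrix_left_invertible_ker)

text \<open>Along the segment from the identity to \<open>G\<close> every matrix is positive definite, hence
  invertible, so the determinant cannot change sign on the way.\<close>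
lemma det_pos_if_positive_definite:
  fixes G :: "real^'n^'n"
  assumes pd: "\<And>v. v \<noteq> 0 \<Longrightarrow> 0 < v \<bullet> (G *v v)"
  shows "0 < det G"
proof (rule ccontr)
  assume "\<not> 0 < det G"
  define F where "F t = t *\<^sub>R G + (1 - t) *\<^sub>R mat 1" for t :: real
  have "det (F t) \<noteq> 0" if t: "0 \<le> t" "t \<le> 1" for t
    unfolding det_nonzero_iff_trivial_kernel
  proof (intro allI impI)
    fix v assume "F t *v v = 0"
    then have "v \<bullet> (F t *v v) = 0" by simp
    then have "t * (v \<bullet> (G *v v)) + (1 - t) * (v \<bullet> v) = 0"
      by (simp add: F_def matrix_vector_mult_add_rdistrib scaleR_matrix_vector_assoc[symmetric]
          inner_add_right)
    moreover have "0 < t * (v \<bullet> (G *v v)) + (1 - t) * (v \<bullet> v)" if "v \<noteq> 0"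
    proof (cases "t = 0")
      case False
      with t pd[OF that] show ?thesis by (intro add_pos_nonneg) auto
    qed (use that in simp)
    ultimately show "v = 0" by force
  qed
  moreover have "continuous_on {0..1} (\<lambda>t. det (F t))"
    unfolding det_def F_def by (intro continuous_intros)
  moreover have "det (F 0) = 1" "det (F 1) = det G"
    by (simp_all add: F_def)
  ultimately show False
    using IVT2'[of "\<lambda>t. det (F t)" 1 0 0] \<open>\<not> 0 < det G\<close> by force
qed

lemma bij_betw_idx: "bij_betw (idx :: 'd::finite \<Rightarrow> nat) UNIV {..<CARD('d)}"
proof -
  have "\<exists>f. bij_betw f (UNIV :: 'd set) {..<CARD('d)}"
    by (rule finite_same_card_bij) auto
  then show ?thesis unfolding idx_def by (rule someI_ex)
qed

lemma gram_component: "gram X K $ i $ j = (\<Sum>l\<in>K. X l $ i * X l $ j)"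
  by (simp add: gram_def outer_def sum_component)

lemma inner_gram_mult: "v \<bullet> (gram X K *v v) = (\<Sum>l\<in>K. (X l \<bullet> v)\<^sup>2)"
proof (induction K rule: infinite_finite_induct)
  case (insert l K)
  have "v \<bullet> (outer (X l) (X l) *v v) = (X l \<bullet> v)\<^sup>2"
    by (simp add: inner_vec_def outer_def matrix_vector_mult_def power2_eq_square
        sum_product sum_distrib_left algebra_simps)
  with insert show ?case
    by (simp add: gram_def matrix_vector_mult_add_rdistrib inner_add_right)
qed (simp_all add: gram_def)

lemma gram_reindex:
  assumes "bij_betw \<pi> I S"
  shows "gram (\<lambda>j\<in>I. X (\<pi> j)) I = gram X S"
  unfolding gram_def using sum.reindex_bij_betw[OF assms, of "\<lambda>l. outer (X l) (X l)"] by simp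

lemma bij_betw_submat_rows:
  assumes "card S = CARD('d::finite)"
  shows "bij_betw (\<lambda>r::'d. sorted_list_of_set S ! idx r) UNIV S"
proof -
  have "finite S" using assms by (intro card_ge_0_finite) simp
  then have "bij_betw ((!) (sorted_list_of_set S)) {..<CARD('d)} S"
    using assms by (intro bij_betw_nth) auto
  then show ?thesis using bij_betw_trans[OF bij_betw_idx] by (simp add: comp_def)
qed

lemma gram_eq_transpose_mult_submat:
  fixes X :: "nat \<Rightarrow> real^'d::finite"
  assumes "card S = CARD('d)"
  shows "gram X S = transpose (submat X S) ** submat X S"
proof -
  have "gram X S $ i $ j = (\<Sum>r\<in>UNIV. submat X S $ r $ i * submat X S $ r $ j)" for i j
    unfolding gram_component submat_def
    using sum.reindex_bij_betw[OF bij_betw_submat_rows[OF assms], of "\<lambda>l. X l $ i * X l $ j"]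
    by simp
  then show ?thesis
    by (simp add: vec_eq_iff matrix_matrix_mult_def transpose_def)
qed

lemma det_gram_eq_det_submat_square:
  fixes X :: "nat \<Rightarrow> real^'d::finite"
  assumes "card S = CARD('d)"
  shows "det (gram X S) = (det (submat X S))\<^sup>2"
  by (simp add: gram_eq_transpose_mult_submat[OF assms] det_mul power2_eq_square)

lemma det_gram_pos_if_det_submat_nonzero:
  fixes X :: "nat \<Rightarrow> real^'d::finite"
  assumes "S \<subseteq> K" "finite K" "card S = CARD('d)" "det (submat X S) \<noteq> 0"
  shows "0 < det (gram X K)"
proof (rule det_pos_if_positive_definite)
  fix v :: "real^'d" assume "v \<noteq> 0"
  then have "submat X S *v v \<noteq> 0" using assms(4) det_nonzero_iff_trivial_kernel by blast
  then obtain r where "(submat X S *v v) $ r \<noteq> 0" by (auto simp: vec_eq_iff)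
  then have "0 < (X (sorted_list_of_set S ! idx r) \<bullet> v)\<^sup>2"
    by (simp add: submat_def matrix_vector_mult_def inner_vec_def mult.commute)
  also have "\<dots> \<le> (\<Sum>l\<in>K. (X l \<bullet> v)\<^sup>2)"
    using bij_betwE[OF bij_betw_submat_rows[OF assms(3)]] assms(1,2)
    by (intro member_le_sum) auto
  finally show "0 < v \<bullet> (gram X K *v v)" by (simp add: inner_gram_mult)
qed

lemma card_extensional_bij_betw:
  assumes "finite S"
  shows "card {\<pi>. bij_betw \<pi> {..<card S} S \<and> \<pi> \<in> extensional {..<card S}} = fact (card S)"
proof -
  let ?n = "card S"
  have "bij_betw (\<lambda>xs. \<lambda>j\<in>{..<?n}. xs ! j) (permutations_of_set S)
      {\<pi>. bij_betw \<pi> {..<?n} S \<and> \<pi> \<in> extensional {..<?n}}"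
  proof (rule bij_betw_byWitness[where f' = "\<lambda>\<pi>. map \<pi> [0..<?n]"])
    have len: "length xs = ?n" if "xs \<in> permutations_of_set S" for xs
      using that by (metis distinct_card permutations_of_setD)
    show "\<forall>xs\<in>permutations_of_set S. map (\<lambda>j\<in>{..<?n}. xs ! j) [0..<?n] = xs"
      using len by (auto intro: nth_equalityI)
    show "\<forall>\<pi>\<in>{\<pi>. bij_betw \<pi> {..<?n} S \<and> \<pi> \<in> extensional {..<?n}}.
        (\<lambda>j\<in>{..<?n}. map \<pi> [0..<?n] ! j) = \<pi>"
      by (auto intro: extensionalityI[where A = "{..<?n}"])
    show "(\<lambda>xs. \<lambda>j\<in>{..<?n}. xs ! j) ` permutations_of_set S
        \<subseteq> {\<pi>. bij_betw \<pi> {..<?n} S \<and> \<pi> \<in> extensional {..<?n}}"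
      using len by (auto dest: permutations_of_setD intro!: bij_betw_nth)
    show "(\<lambda>\<pi>. map \<pi> [0..<?n]) ` {\<pi>. bij_betw \<pi> {..<?n} S \<and> \<pi> \<in> extensional {..<?n}}
        \<subseteq> permutations_of_set S"
      by (auto simp: bij_betw_def distinct_map atLeast0LessThan)
  qed
  then show ?thesis using assms by (simp add: bij_betw_same_card[symmetric])
qed

lemma borel_measurable_PiM_component:
  fixes D :: "(real^'d::finite) measure"
  assumes "sets D = sets borel" "l \<in> K"
  shows "(\<lambda>X. X l $ i) \<in> borel_measurable (PiM K (\<lambda>_. D))"
proof -
  have "(\<lambda>X. X l) \<in> PiM K (\<lambda>_. D) \<rightarrow>\<^sub>M D"
    using assms(2) by (rule measurable_component_singleton)
  then have "(\<lambda>X. X l) \<in> borel_measurable (PiM K (\<lambda>_. D))"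
    unfolding measurable_cong_sets[OF refl assms(1)] .
  then show ?thesis by (rule measurable_compose) (rule borel_measurable_nth)
qed

lemma borel_measurable_det_gram:
  fixes D :: "(real^'d::finite) measure"
  assumes "sets D = sets borel"
  shows "(\<lambda>X. det (gram X K)) \<in> borel_measurable (PiM K (\<lambda>_. D))"
  unfolding det_def gram_component
  by (intro borel_measurable_sum borel_measurable_prod borel_measurable_times
      borel_measurable_const borel_measurable_PiM_component[OF assms])

lemma borel_measurable_det_submat:
  fixes D :: "(real^'d::finite) measure"
  assumes "sets D = sets borel" "S \<subseteq> K" "card S = CARD('d)"
  shows "(\<lambda>X. det (submat X S)) \<in> borel_measurable (PiM K (\<lambda>_. D))"
proof -
  have "(\<lambda>X. X (sorted_list_of_set S ! idx r) $ i) \<in> borel_measurable (PiM K (\<lambda>_. D))"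
    for r :: 'd and i
    using bij_betwE[OF bij_betw_submat_rows[OF assms(3)]] assms(2)
    by (intro borel_measurable_PiM_component[OF assms(1)]) auto
  then show ?thesis
    unfolding det_def submat_def
    by (intro borel_measurable_sum borel_measurable_prod borel_measurable_times
        borel_measurable_const) simp
qed

lemma measurable_PiM_reindex:
  assumes "\<pi> ` I \<subseteq> K"
  shows "(\<lambda>X. \<lambda>j\<in>I. X (\<pi> j)) \<in> PiM K (\<lambda>_. M) \<rightarrow>\<^sub>M PiM I (\<lambda>_. M)"
  using assms by (intro measurable_restrict measurable_component_singleton) auto

lemma nn_integral_PiM_reindex:
  assumes "prob_space D" "inj_on \<pi> I" "\<pi> ` I \<subseteq> K"
    and f: "f \<in> borel_measurable (PiM I (\<lambda>_. D))"
  shows "(\<integral>\<^sup>+X. f (\<lambda>j\<in>I. X (\<pi> j)) \<partial>PiM K (\<lambda>_. D)) = (\<integral>\<^sup>+Y. f Y \<partial>PiM I (\<lambda>_. D))"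
proof -
  have "distr (PiM K (\<lambda>_. D)) (PiM I (\<lambda>_. D)) (\<lambda>X. \<lambda>j\<in>I. X (\<pi> j)) = PiM I (\<lambda>_. D)"
    using distr_PiM_reindex[of K "\<lambda>_. D" \<pi> I] assms(1-3) by auto
  then show ?thesis
    using nn_integral_distr[OF measurable_PiM_reindex[OF assms(3), of D], of f] f by simp
qed

lemma borel_measurable_volume_selection_term:
  fixes D :: "(real^'d::finite) measure"
  assumes "sets D = sets borel" "S \<subseteq> {..<k}" "bij_betw \<pi> {..<CARD('d)} S"
    and A: "A \<in> sets (PiM {..<CARD('d)} (\<lambda>_. D))"
  shows "(\<lambda>X. ennreal ((det (submat X S))\<^sup>2 / det (gram X {..<k}) / fact CARD('d))
      * indicator A (\<lambda>j\<in>{..<CARD('d)}. X (\<pi> j))) \<in> borel_measurable (PiM {..<k} (\<lambda>_. D))"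
proof -
  note [measurable] = A borel_measurable_det_gram[OF assms(1)]
    borel_measurable_det_submat[OF assms(1,2) bij_betw_same_card[OF assms(3), symmetric, simplified]]
    measurable_PiM_reindex[of \<pi> "{..<CARD('d)}" "{..<k}" D]
  show ?thesis using assms(2) bij_betw_imp_surj_on[OF assms(3)] by simp
qed

lemma ennreal_divide_mult_cancel:
  fixes a G f C s :: real
  assumes "0 \<le> a" "a \<noteq> 0 \<Longrightarrow> 0 < G" "0 < f" "0 < C"
  shows "ennreal (G / (f * C * s)) * ennreal (a / G / f) = ennreal (1 / (C * f)) * ennreal (a / (f * s))"
proof (cases "a = 0")
  case False
  with assms have "0 < G" by auto
  with assms have "ennreal (G / (f * C * s)) * ennreal (a / G / f)
      = ennreal (G / (f * C * s) * (a / G / f))"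
    by (intro ennreal_mult''[symmetric]) simp
  also have "\<dots> = ennreal (1 / (C * f) * (a / (f * s)))"
    using assms \<open>0 < G\<close> by (simp add: field_simps)
  also have "\<dots> = ennreal (1 / (C * f)) * ennreal (a / (f * s))"
    using assms by (intro ennreal_mult') simp
  finally show ?thesis .
qed simp

lemma nn_integral_VS_selected_tuple:
  fixes D :: "(real^'d::finite) measure"
  assumes D: "prob_space D" "sets D = sets borel"
    and S: "S \<subseteq> {..<k}" and \<pi>: "bij_betw \<pi> {..<CARD('d)} S"
    and A: "A \<in> sets (PiM {..<CARD('d)} (\<lambda>_. D))"
  shows "(\<integral>\<^sup>+X. ennreal ((det (submat X S))\<^sup>2 / det (gram X {..<k}) / fact CARD('d))
             * indicator A (\<lambda>j\<in>{..<CARD('d)}. X (\<pi> j)) \<partial>VS D k)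
       = ennreal (1 / (real (k choose CARD('d)) * fact CARD('d))) * emeasure (VS D CARD('d)) A"
proof -
  let ?d = "CARD('d)" and ?P = "\<lambda>X. \<lambda>j\<in>{..<CARD('d)}. X (\<pi> j)"
  let ?C = "real (k choose ?d)" and ?\<Sigma> = "det (second_moment D)"
  let ?h = "\<lambda>Y. ennreal (det (gram Y {..<?d}) / (fact ?d * ?\<Sigma>)) * indicator A Y"
  have card_S: "card S = ?d"
    using bij_betw_same_card[OF \<pi>] by simp
  then have "0 < ?C"
    using card_mono[OF _ S] by simp
  have "\<pi> ` {..<?d} \<subseteq> {..<k}"
    using bij_betw_imp_surj_on[OF \<pi>] S by simp
  note [measurable] = A borel_measurable_det_gram[OF D(2)] measurable_PiM_reindex[OF this, of D]
    borel_measurable_volume_selection_term[OF D(2) S \<pi> A]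
  have square: "(det (submat X S))\<^sup>2 = det (gram (?P X) {..<?d})" for X :: "nat \<Rightarrow> real^'d"
    using det_gram_eq_det_submat_square[OF card_S, of X] gram_reindex[OF \<pi>, of X] by simp
  have pointwise:
    "ennreal (det (gram X {..<k}) / (fact ?d * ?C * ?\<Sigma>))
       * ennreal ((det (submat X S))\<^sup>2 / det (gram X {..<k}) / fact ?d)
     = ennreal (1 / (?C * fact ?d)) * ennreal (det (gram (?P X) {..<?d}) / (fact ?d * ?\<Sigma>))"
    for X :: "nat \<Rightarrow> real^'d"
    unfolding square[symmetric]
  proof (rule ennreal_divide_mult_cancel)
    show "(det (submat X S))\<^sup>2 \<noteq> 0 \<Longrightarrow> 0 < det (gram X {..<k})"
      using card_S S by (intro det_gram_pos_if_det_submat_nonzero) auto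
  qed (use \<open>0 < ?C\<close> in auto)
  have "(\<integral>\<^sup>+X. ennreal ((det (submat X S))\<^sup>2 / det (gram X {..<k}) / fact ?d)
             * indicator A (?P X) \<partial>VS D k)
      = (\<integral>\<^sup>+X. ennreal (det (gram X {..<k}) / (fact ?d * ?C * ?\<Sigma>))
             * (ennreal ((det (submat X S))\<^sup>2 / det (gram X {..<k}) / fact ?d)
             * indicator A (?P X)) \<partial>PiM {..<k} (\<lambda>_. D))"
    unfolding VS_def by (rule nn_integral_density) measurable
  also have "\<dots> = (\<integral>\<^sup>+X. ennreal (1 / (?C * fact ?d))
             * (ennreal (det (gram (?P X) {..<?d}) / (fact ?d * ?\<Sigma>)) * indicator A (?P X))
             \<partial>PiM {..<k} (\<lambda>_. D))"
    by (simp only: pointwise mult.assoc[symmetric])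
  also have "\<dots> = ennreal (1 / (?C * fact ?d))
      * (\<integral>\<^sup>+Y. ennreal (det (gram Y {..<?d}) / (fact ?d * ?\<Sigma>)) * indicator A Y \<partial>PiM {..<?d} (\<lambda>_. D))"
  proof -
    have "(\<integral>\<^sup>+X. ?h (?P X) \<partial>PiM {..<k} (\<lambda>_. D)) = (\<integral>\<^sup>+Y. ?h Y \<partial>PiM {..<?d} (\<lambda>_. D))"
      using \<open>\<pi> ` {..<?d} \<subseteq> {..<k}\<close>
      by (intro nn_integral_PiM_reindex D(1) bij_betw_imp_inj_on[OF \<pi>]) simp_all
    then show ?thesis by (subst nn_integral_cmult) simp_all
  qed
  also have "\<dots> = ennreal (1 / (?C * fact ?d)) * emeasure (VS D ?d) A"
    unfolding VS_def by (subst emeasure_density) simp_all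
  finally show ?thesis .
qed

lemma sum_ordered_subsets_const:
  "(\<Sum>S\<in>{S. S \<subseteq> {..<k} \<and> card S = n}.
      \<Sum>\<pi>\<in>{\<pi>. bij_betw \<pi> {..<n} S \<and> \<pi> \<in> extensional {..<n}}. c)
    = of_nat ((k choose n) * fact n) * (c :: 'a::semiring_1)"
proof -
  have "(\<Sum>\<pi>\<in>{\<pi>. bij_betw \<pi> {..<n} S \<and> \<pi> \<in> extensional {..<n}}. c) = of_nat (fact n) * c"
    if "S \<subseteq> {..<k}" "card S = n" for S
    using card_extensional_bij_betw[of S] finite_subset[OF that(1)] that(2) by simp
  then show ?thesis
    using n_subsets[of "{..<k}" n] by (simp add: mult.assoc)
qed

text \<open>The integrability and invertibility hypotheses only make \<open>VS\<close> a probability measure;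
  the identity holds without them (if \<open>det \<Sigma> \<le> 0\<close>, both sides vanish).\<close>
theorem lemma6:
  fixes D :: "(real^'d::finite) measure" and k :: nat
  assumes "prob_space D"
    and "sets D = sets borel"
    and "integrable D (\<lambda>x. norm x ^ 2)"
    and "invertible (second_moment D)"
    and "k \<ge> CARD('d)"
  shows "\<forall>A \<in> sets (PiM {..<CARD('d)} (\<lambda>_. D)).
    emeasure (VS D CARD('d)) A =
    (\<integral>\<^sup>+ X. (\<Sum>S \<in> {S. S \<subseteq> {..<k} \<and> card S = CARD('d)}.
        \<Sum>\<pi> \<in> {\<pi>. bij_betw \<pi> {..<CARD('d)} S \<and> \<pi> \<in> extensional {..<CARD('d)}}.
          ennreal ((det (submat X S))\<^sup>2 / det (gram X {..<k}) / fact CARD('d))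
          * indicator A (\<lambda>j\<in>{..<CARD('d)}. X (\<pi> j)))
     \<partial>VS D k)"
proof
  fix A assume A: "A \<in> sets (PiM {..<CARD('d)} (\<lambda>_. D))"
  let ?d = "CARD('d)" and ?C = "k choose CARD('d)"
  let ?subsets = "{S. S \<subseteq> {..<k} \<and> card S = ?d}"
  let ?orderings = "\<lambda>S. {\<pi>. bij_betw \<pi> {..<?d} S \<and> \<pi> \<in> extensional {..<?d}}"
  let ?term = "\<lambda>S \<pi> X. ennreal ((det (submat X S))\<^sup>2 / det (gram X {..<k}) / fact ?d)
    * indicator A (\<lambda>j\<in>{..<?d}. X (\<pi> j))"
  let ?share = "ennreal (1 / (real ?C * fact ?d)) * emeasure (VS D ?d) A"
  have term_measurable: "?term S \<pi> \<in> borel_measurable (VS D k)"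
    if "S \<in> ?subsets" "\<pi> \<in> ?orderings S" for S \<pi>
    using borel_measurable_volume_selection_term[OF assms(2) _ _ A] that by (simp add: VS_def)
  have "(\<integral>\<^sup>+X. (\<Sum>S\<in>?subsets. \<Sum>\<pi>\<in>?orderings S. ?term S \<pi> X) \<partial>VS D k)
      = (\<Sum>S\<in>?subsets. \<integral>\<^sup>+X. (\<Sum>\<pi>\<in>?orderings S. ?term S \<pi> X) \<partial>VS D k)"
    by (intro nn_integral_sum borel_measurable_sum term_measurable)
  also have "\<dots> = (\<Sum>S\<in>?subsets. \<Sum>\<pi>\<in>?orderings S. \<integral>\<^sup>+X. ?term S \<pi> X \<partial>VS D k)"
    by (intro sum.cong refl nn_integral_sum term_measurable)
  also have "\<dots> = (\<Sum>S\<in>?subsets. \<Sum>\<pi>\<in>?orderings S. ?share)"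
    using assms(1,2) A by (intro sum.cong refl nn_integral_VS_selected_tuple) auto
  also have "\<dots> = of_nat (?C * fact ?d) * ?share"
    by (rule sum_ordered_subsets_const)
  also have "\<dots> = emeasure (VS D ?d) A"
    using assms(5) by (simp add: ennreal_of_nat_eq_real_of_nat ennreal_mult'[symmetric] mult.assoc[symmetric])
  finally show "emeasure (VS D ?d) A
      = (\<integral>\<^sup>+X. (\<Sum>S\<in>?subsets. \<Sum>\<pi>\<in>?orderings S. ?term S \<pi> X) \<partial>VS D k)"
    by simp
qed

end
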